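(* Let $m\ge 2$, let $J\subseteq\{1,\dots,m\}$ with $|J|\ge 2$, and let $i,j$ be distinct elements of $J$. Then the matrix $\mathrm{diag}(\theta_{ij}(J),1,1,\dots)\in \mathrm{GL}_\infty(\mathbb S_m)$ belongs to $E_\infty(\mathbb S_m)$. Equivalently (with $n=m+1$ and the identification below), for every $J\subseteq\{1,\dots,n\}$ with $n\in J$, $|J|\ge3$, and distinct $i,j\in J\setminus\{n\}$, the unit $\theta_{ij}(J)\in(1+\mathfrak p_n)^*=\mathrm{GL}_\infty(\mathbb S_{n-1})$ lies in $E_\infty(\mathbb S_{n-1})$.
   Context: $K$ is a field. For $n\ge1$, $\mathbb S_n$ is the $K$-algebra generated by $x_1,\dots,x_n,y_1,\dots,y_n$ subject to $y_ix_i=1$ for all $i$ and $[x_i,y_j]=[x_i,x_j]=[y_i,y_j]=0$ for $i\ne j$. For $i\in\{1,\dots,n\}$ and $s,t\in\mathbb N$ put $E_{st}(i):=x_i^sy_i^t-x_i^{s+1}y_i^{t+1}$ (these satisfy $E_{st}(i)E_{uv}(i)=\delta_{tu}E_{sv}(i)$), $e_i:=E_{00}(i)=1-x_iy_i$, and $e_I:=\prod_{i\in I}e_i$ for $I\subseteq\{1,\dots,n\}$. For $J\subseteq\{1,\dots,n\}$ with $|J|\ge2$ and distinct $i,j\in J$, $\theta_{ij}(J):=(1+(y_i-1)e_{J\setminus\{i\}})(1+(x_j-1)e_{J\setminus\{j\}})$; it is a unit of $\mathbb S_n$. $\mathfrak p_n$ denotes the ideal of $\mathbb S_n$ generated by $e_n$,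 and $(1+\mathfrak p_n)^*$ the group of units of $\mathbb S_n$ lying in $1+\mathfrak p_n$. $\mathbb S_{n-1}$ is identified with the subalgebra of $\mathbb S_n$ generated by $x_1,\dots,x_{n-1},y_1,\dots,y_{n-1}$, and $\mathrm{GL}_\infty(\mathbb S_{n-1})$ is identified with $(1+\mathfrak p_n)^*$ via the group isomorphism $(a_{kl})\mapsto 1+\sum_{k,l}(a_{kl}-\delta_{kl})E_{kl}(n)$. For a ring $A$, $\mathrm{GL}_\infty(A)$ and $E_\infty(A)$ are the stable general linear group and its subgroup generated by elementary matrices $1+aE_{kl}$ ($a\in A$, $k\neq l$). *)

theory Defs
  imports Main
begin

text \<open>
  The Jacobson algebra S_m is presented by generators and relations.  We realise it
  literally: the free associative K-algebra on the letters X i, Y i (1 <= i <= m)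
  is modelled as finitely supported functions from words (letter lists) to K,
  with concatenation (Cauchy) product; S_m is its quotient by the two-sided ideal
  generated by the defining relations.  Elements of S_m are handled through
  representatives, and equality in S_m is congruence modulo that ideal.
\<close>

datatype letter = X nat | Y nat

type_synonym 'k fa = "letter list \<Rightarrow> 'k"

definition fa_zero :: "'k::field fa" where
  "fa_zero = (\<lambda>w. 0)"

definition fa_one :: "'k::field fa" where
  "fa_one = (\<lambda>w. if w = [] then 1 else 0)"

definition fa_gen :: "letter \<Rightarrow> 'k::field fa" where
  "fa_gen c = (\<lambda>w. if w = [c] then 1 else 0)"

definition fa_add :: "'k::field fa \<Rightarrow> 'k fa \<Rightarrow> 'k fa" where
  "fa_add a b = (\<lambda>w. a w + b w)"

definition fa_sub :: "'k::field fa \<Rightarrow> 'k fa \<Rightarrow> 'k fa" where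
  "fa_sub a b = (\<lambda>w. a w - b w)"

definition fa_mult :: "'k::field fa \<Rightarrow> 'k fa \<Rightarrow> 'k fa" where
  "fa_mult a b = (\<lambda>w. \<Sum>i\<le>length w. a (take i w) * b (drop i w))"

definition letters :: "nat \<Rightarrow> letter set" where
  "letters m = {X i | i. i \<in> {1..m}} \<union> {Y i | i. i \<in> {1..m}}"

definition free_alg :: "nat \<Rightarrow> 'k::field fa set" where
  "free_alg m = {a. finite {w. a w \<noteq> 0} \<and> (\<forall>w. a w \<noteq> 0 \<longrightarrow> set w \<subseteq> letters m)}"

definition fa_comm :: "'k::field fa \<Rightarrow> 'k fa \<Rightarrow> 'k fa" where
  "fa_comm a b = fa_sub (fa_mult a b) (fa_mult b a)"

definition jac_rels :: "nat \<Rightarrow> 'k::field fa set" where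
  "jac_rels m =
     {fa_sub (fa_mult (fa_gen (Y i)) (fa_gen (X i))) fa_one | i. i \<in> {1..m}}
   \<union> {fa_comm (fa_gen (X i)) (fa_gen (Y j)) | i j. i \<in> {1..m} \<and> j \<in> {1..m} \<and> i \<noteq> j}
   \<union> {fa_comm (fa_gen (X i)) (fa_gen (X j)) | i j. i \<in> {1..m} \<and> j \<in> {1..m} \<and> i \<noteq> j}
   \<union> {fa_comm (fa_gen (Y i)) (fa_gen (Y j)) | i j. i \<in> {1..m} \<and> j \<in> {1..m} \<and> i \<noteq> j}"

inductive_set jac_ideal :: "nat \<Rightarrow> 'k::field fa set" for m where
  zero: "fa_zero \<in> jac_ideal m"
| gen: "r \<in> jac_rels m \<Longrightarrow> u \<in> free_alg m \<Longrightarrow> v \<in> free_alg m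
          \<Longrightarrow> fa_mult (fa_mult u r) v \<in> jac_ideal m"
| add: "a \<in> jac_ideal m \<Longrightarrow> b \<in> jac_ideal m \<Longrightarrow> fa_add a b \<in> jac_ideal m"

definition jac_eq :: "nat \<Rightarrow> 'k::field fa \<Rightarrow> 'k fa \<Rightarrow> bool" where
  "jac_eq m a b \<longleftrightarrow> fa_sub a b \<in> jac_ideal m"

text \<open>The elements e_i, e_I, theta_ij(J) (representatives in F_m).  The product e_I is
  taken in increasing order of indices (the e_i commute in S_m, so any order gives
  the same element of S_m).\<close>

definition jac_x :: "nat \<Rightarrow> 'k::field fa" where "jac_x i = fa_gen (X i)"
definition jac_y :: "nat \<Rightarrow> 'k::field fa" where "jac_y i = fa_gen (Y i)"

definition jac_e :: "nat \<Rightarrow> 'k::field fa" where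
  "jac_e i = fa_sub fa_one (fa_mult (jac_x i) (jac_y i))"

definition jac_eI :: "nat set \<Rightarrow> 'k::field fa" where
  "jac_eI I = foldr (\<lambda>i acc. fa_mult (jac_e i) acc) (sorted_list_of_set I) fa_one"

definition jac_theta :: "nat \<Rightarrow> nat \<Rightarrow> nat set \<Rightarrow> 'k::field fa" where
  "jac_theta i j J =
     fa_mult (fa_add fa_one (fa_mult (fa_sub (jac_y i) fa_one) (jac_eI (J - {i}))))
             (fa_add fa_one (fa_mult (fa_sub (jac_x j) fa_one) (jac_eI (J - {j}))))"

text \<open>N x N matrices (indices 0..N-1) with entries in F_m.\<close>

type_synonym 'k fmat = "nat \<Rightarrow> nat \<Rightarrow> 'k fa"

definition mat_one :: "'k::field fmat" where
  "mat_one = (\<lambda>i j. if i = j then fa_one else fa_zero)"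

definition mat_mult :: "nat \<Rightarrow> 'k::field fmat \<Rightarrow> 'k fmat \<Rightarrow> 'k fmat" where
  "mat_mult N A B = (\<lambda>i j w. \<Sum>k<N. fa_mult (A i k) (B k j) w)"

definition elem_mat :: "nat \<Rightarrow> nat \<Rightarrow> 'k::field fa \<Rightarrow> 'k fmat" where
  "elem_mat k l a = (\<lambda>i j. if i = j then fa_one else if i = k \<and> j = l then a else fa_zero)"

definition diag_first :: "'k::field fa \<Rightarrow> 'k fmat" where
  "diag_first u = (\<lambda>i j. if i = j then (if i = 0 then u else fa_one) else fa_zero)"

text \<open>An N x N matrix over S_m (given by representatives) lies in E_N(S_m), the subgroup
  generated by elementary matrices (closed under inverses since
  (1 + a E_kl)^{-1} = 1 - a E_kl), iff it equals, in S_m, a finite product of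
  elementary matrices with entries in S_m.\<close>

definition in_E_N :: "nat \<Rightarrow> nat \<Rightarrow> 'k::field fmat \<Rightarrow> bool" where
  "in_E_N m N A \<longleftrightarrow>
     (\<exists>es :: (nat \<times> nat \<times> 'k fa) list.
        (\<forall>(k, l, a) \<in> set es. k < N \<and> l < N \<and> k \<noteq> l \<and> a \<in> free_alg m) \<and>
        (\<forall>i<N. \<forall>j<N.
           jac_eq m (foldr (\<lambda>(k, l, a) P. mat_mult N (elem_mat k l a) P) es mat_one i j) (A i j)))"

definition diag_in_E_inf :: "nat \<Rightarrow> 'k::field fa \<Rightarrow> bool" where
  "diag_in_E_inf m u \<longleftrightarrow> (\<exists>N\<ge>1. in_E_N m N (diag_first u))"

end

theory Submission
  imports Defs
begin

text \<open>
  Put \<open>p = e_{J - {i,j}}\<close>.  Then \<open>e_{J - {i}} = e_j p\<close>, \<open>e_{J - {j}} = e_i p\<close>, and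
  \<open>p\<close> is an idempotent commuting with \<open>x_i, y_i, x_j, y_j\<close>, so
  \<open>\<theta>_ij(J) = (1 + (y_i - 1)(1 - x_j y_j) p)(1 + (x_j - 1)(1 - x_i y_i) p)\<close>.
  In any ring, for \<open>a b = 1\<close> and such an idempotent \<open>p\<close>, a Whitehead-type product of six
  elementary matrices is a triangular matrix with diagonal \<open>(1 + p(a - 1), 1 + p(b - 1))\<close>;
  four of these (for the pairs \<open>(y_j, x_j)\<close> and \<open>(y_i, x_i)\<close>, in positions \<open>1\<close> and \<open>2\<close>)
  multiply to \<open>diag(\<theta>_ij(J), 1, 1)\<close>.  This is a computation with \<open>3 \<times> 3\<close> matrices over a ring.
\<close>

section \<open>Arithmetic of the free algebra\<close>

text \<open>Negation, and the left quotient of a series by a letter; the latter turns statements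
  about the Cauchy product into an induction on the length of words.\<close>

definition fa_neg :: "'k::field fa \<Rightarrow> 'k fa" where
  "fa_neg a = (\<lambda>w. - a w)"

definition fa_shift :: "letter \<Rightarrow> 'k::field fa \<Rightarrow> 'k fa" where
  "fa_shift c a = (\<lambda>w. a (c # w))"

lemma fa_mult_Nil: "fa_mult a b [] = a [] * b []"
  by (simp add: fa_mult_def)

lemma fa_mult_Cons: "fa_mult a b (c # w) = a [] * b (c # w) + fa_mult (fa_shift c a) b w"
  unfolding fa_mult_def fa_shift_def
  by (simp add: sum.atMost_Suc_shift del: sum.atMost_Suc)

lemma fa_mult_linear_left:
  "fa_mult (\<lambda>v. r * f v + g v) c w = r * fa_mult f c w + fa_mult g c w"
  unfolding fa_mult_def by (simp add: sum.distrib sum_distrib_left algebra_simps)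

lemma fa_shift_mult:
  "fa_shift c (fa_mult a b) = (\<lambda>v. a [] * fa_shift c b v + fa_mult (fa_shift c a) b v)"
  by (rule ext) (simp add: fa_shift_def fa_mult_Cons)

lemma fa_mult_assoc: "fa_mult (fa_mult a b) c = fa_mult a (fa_mult b c)"
proof (rule ext)
  fix w show "fa_mult (fa_mult a b) c w = fa_mult a (fa_mult b c) w"
  proof (induction w arbitrary: a b)
    case Nil
    then show ?case by (simp add: fa_mult_Nil mult.assoc)
  next
    case (Cons x w)
    have "fa_mult (fa_mult a b) c (x # w) = a [] * b [] * c (x # w)
        + (a [] * fa_mult (fa_shift x b) c w + fa_mult (fa_mult (fa_shift x a) b) c w)"
      by (simp add: fa_mult_Cons fa_mult_Nil fa_shift_mult fa_mult_linear_left)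
    also have "\<dots> = a [] * b [] * c (x # w)
        + (a [] * fa_mult (fa_shift x b) c w + fa_mult (fa_shift x a) (fa_mult b c) w)"
      using Cons.IH by simp
    also have "\<dots> = fa_mult a (fa_mult b c) (x # w)"
      by (simp add: fa_mult_Cons fa_mult_Nil algebra_simps)
    finally show ?case .
  qed
qed

lemma fa_mult_add_left: "fa_mult (fa_add a b) c = fa_add (fa_mult a c) (fa_mult b c)"
  unfolding fa_mult_def fa_add_def by (simp add: sum.distrib algebra_simps)

lemma fa_mult_add_right: "fa_mult c (fa_add a b) = fa_add (fa_mult c a) (fa_mult c b)"
  unfolding fa_mult_def fa_add_def by (simp add: sum.distrib algebra_simps)

lemma fa_mult_sub_left: "fa_mult (fa_sub a b) c = fa_sub (fa_mult a c) (fa_mult b c)"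
  unfolding fa_mult_def fa_sub_def by (simp add: sum_subtractf algebra_simps)

lemma fa_mult_sub_right: "fa_mult c (fa_sub a b) = fa_sub (fa_mult c a) (fa_mult c b)"
  unfolding fa_mult_def fa_sub_def by (simp add: sum_subtractf algebra_simps)

lemma fa_mult_neg_left: "fa_mult (fa_neg a) c = fa_neg (fa_mult a c)"
  unfolding fa_mult_def fa_neg_def by (simp add: sum_negf)

lemma fa_mult_zero_left: "fa_mult fa_zero c = fa_zero"
  unfolding fa_mult_def fa_zero_def by simp

lemma fa_mult_zero_right: "fa_mult c fa_zero = fa_zero"
  unfolding fa_mult_def fa_zero_def by simp

lemma fa_shift_one: "fa_shift c fa_one = fa_zero"
  by (rule ext) (simp add: fa_shift_def fa_one_def fa_zero_def)

lemma fa_mult_one_left: "fa_mult fa_one a = a"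
proof (rule ext)
  show "fa_mult fa_one a w = a w" for w
    by (cases w) (simp_all add: fa_mult_Nil fa_mult_Cons fa_shift_one fa_mult_zero_left,
                  simp_all add: fa_one_def fa_zero_def)
qed

lemma fa_mult_one_right: "fa_mult a fa_one = a"
proof (rule ext)
  show "fa_mult a fa_one w = a w" for w
    by (induction w arbitrary: a) (simp_all add: fa_mult_Nil fa_mult_Cons fa_one_def fa_shift_def)
qed


lemma free_algI:
  "finite {w. a w \<noteq> 0} \<Longrightarrow> (\<And>w. a w \<noteq> 0 \<Longrightarrow> set w \<subseteq> letters m) \<Longrightarrow> a \<in> free_alg m"
  by (simp add: free_alg_def)

lemma free_alg_finite: "a \<in> free_alg m \<Longrightarrow> finite {w. a w \<noteq> 0}"
  by (simp add: free_alg_def)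

lemma free_alg_letters: "a \<in> free_alg m \<Longrightarrow> a w \<noteq> 0 \<Longrightarrow> set w \<subseteq> letters m"
  by (simp add: free_alg_def)

text \<open>A series supported inside the union of the supports of two elements of \<open>F_m\<close> is in \<open>F_m\<close>;
  this covers all the coefficientwise operations at once.\<close>

lemma free_alg_supported:
  assumes "a \<in> free_alg m" "b \<in> free_alg m" "\<And>w. c w \<noteq> 0 \<Longrightarrow> a w \<noteq> 0 \<or> b w \<noteq> 0"
  shows "c \<in> free_alg m"
proof (rule free_algI)
  show "finite {w. c w \<noteq> 0}"
  proof (rule finite_subset)
    show "{w. c w \<noteq> 0} \<subseteq> {w. a w \<noteq> 0} \<union> {w. b w \<noteq> 0}" using assms(3) by blast
  qed (simp add: free_alg_finite[OF assms(1)] free_alg_finite[OF assms(2)])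
  show "set w \<subseteq> letters m" if "c w \<noteq> 0" for w
    using assms(3)[OF that] free_alg_letters[OF assms(1)] free_alg_letters[OF assms(2)] by blast
qed

lemma free_alg_zero: "fa_zero \<in> free_alg m"
  by (rule free_algI) (simp_all add: fa_zero_def)

lemma free_alg_one: "fa_one \<in> free_alg m"
proof (rule free_algI)
  show "finite {w. fa_one w \<noteq> (0::'a)}"
    by (rule finite_subset[of _ "{[]}"]) (auto simp: fa_one_def)
qed (auto simp: fa_one_def split: if_splits)

lemma free_alg_gen: "c \<in> letters m \<Longrightarrow> fa_gen c \<in> free_alg m"
proof (rule free_algI)
  show "finite {w. fa_gen c w \<noteq> (0::'a)}"
    by (rule finite_subset[of _ "{[c]}"]) (auto simp: fa_gen_def)
qed (auto simp: fa_gen_def split: if_splits)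

lemma free_alg_add: "a \<in> free_alg m \<Longrightarrow> b \<in> free_alg m \<Longrightarrow> fa_add a b \<in> free_alg m"
  by (rule free_alg_supported[where a=a and b=b]) (auto simp: fa_add_def)

lemma free_alg_sub: "a \<in> free_alg m \<Longrightarrow> b \<in> free_alg m \<Longrightarrow> fa_sub a b \<in> free_alg m"
  by (rule free_alg_supported[where a=a and b=b]) (auto simp: fa_sub_def)

lemma free_alg_neg: "a \<in> free_alg m \<Longrightarrow> fa_neg a \<in> free_alg m"
  by (rule free_alg_supported[where a=a and b=a]) (auto simp: fa_neg_def)

lemma free_alg_mult:
  assumes a: "a \<in> free_alg m" and b: "b \<in> free_alg m"
  shows "fa_mult a b \<in> free_alg m"
proof (rule free_algI)
  have split: "\<exists>i. a (take i w) \<noteq> 0 \<and> b (drop i w) \<noteq> 0" if "fa_mult a b w \<noteq> 0" for w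
    using that unfolding fa_mult_def by (metis (mono_tags, lifting) mult_eq_0_iff sum.neutral)
  show "finite {w. fa_mult a b w \<noteq> 0}"
  proof (rule finite_subset)
    show "{w. fa_mult a b w \<noteq> 0} \<subseteq> (\<lambda>(u, v). u @ v) ` ({w. a w \<noteq> 0} \<times> {w. b w \<noteq> 0})"
    proof
      fix w assume "w \<in> {w. fa_mult a b w \<noteq> 0}"
      then obtain i where "a (take i w) \<noteq> 0" "b (drop i w) \<noteq> 0" using split by blast
      then show "w \<in> (\<lambda>(u, v). u @ v) ` ({w. a w \<noteq> 0} \<times> {w. b w \<noteq> 0})"
        by (intro image_eqI[of _ _ "(take i w, drop i w)"]) auto
    qed
  qed (simp add: free_alg_finite[OF a] free_alg_finite[OF b])
  show "set w \<subseteq> letters m" if nz: "fa_mult a b w \<noteq> 0" for w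
  proof -
    obtain i where "a (take i w) \<noteq> 0" "b (drop i w) \<noteq> 0" using split[OF nz] by blast
    then have "set (take i w) \<subseteq> letters m" "set (drop i w) \<subseteq> letters m"
      using free_alg_letters[OF a] free_alg_letters[OF b] by auto
    then show ?thesis by (metis append_take_drop_id set_append Un_subset_iff)
  qed
qed


lemma jac_ideal_neg: "a \<in> jac_ideal m \<Longrightarrow> fa_neg a \<in> jac_ideal m"
proof (induction rule: jac_ideal.induct)
  case zero
  have "fa_neg fa_zero = (fa_zero :: 'a fa)" by (simp add: fa_neg_def fa_zero_def)
  then show ?case by (simp add: jac_ideal.zero)
next
  case (gen r u v)
  have "fa_neg (fa_mult (fa_mult u r) v) = fa_mult (fa_mult (fa_neg u) r) v"
    by (simp add: fa_mult_neg_left)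
  then show ?case using gen by (simp add: jac_ideal.gen free_alg_neg)
next
  case (add a b)
  have "fa_neg (fa_add a b) = fa_add (fa_neg a) (fa_neg b)" by (simp add: fa_neg_def fa_add_def)
  then show ?case using add by (simp add: jac_ideal.add)
qed

lemma jac_ideal_mult_left: "a \<in> jac_ideal m \<Longrightarrow> c \<in> free_alg m \<Longrightarrow> fa_mult c a \<in> jac_ideal m"
proof (induction rule: jac_ideal.induct)
  case (gen r u v)
  have "fa_mult c (fa_mult (fa_mult u r) v) = fa_mult (fa_mult (fa_mult c u) r) v"
    by (simp add: fa_mult_assoc)
  then show ?case using gen by (simp add: jac_ideal.gen free_alg_mult)
qed (simp_all add: fa_mult_zero_right fa_mult_add_right jac_ideal.zero jac_ideal.add)

lemma jac_ideal_mult_right: "a \<in> jac_ideal m \<Longrightarrow> c \<in> free_alg m \<Longrightarrow> fa_mult a c \<in> jac_ideal m"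
proof (induction rule: jac_ideal.induct)
  case (gen r u v)
  have "fa_mult (fa_mult (fa_mult u r) v) c = fa_mult (fa_mult u r) (fa_mult v c)"
    by (simp add: fa_mult_assoc)
  then show ?case using gen by (simp add: jac_ideal.gen free_alg_mult)
qed (simp_all add: fa_mult_zero_left fa_mult_add_left jac_ideal.zero jac_ideal.add)

lemma jac_ideal_rel: "r \<in> jac_rels m \<Longrightarrow> r \<in> jac_ideal m"
  using jac_ideal.gen[of r m fa_one fa_one]
  by (simp add: free_alg_one fa_mult_one_left fa_mult_one_right)

text \<open>With no letters there are no relations, so \<open>S_0 = K\<close> is not the zero ring.\<close>

lemma jac_ideal_0: "a \<in> jac_ideal 0 \<Longrightarrow> a = fa_zero"
  by (induction rule: jac_ideal.induct) (simp_all add: jac_rels_def fa_add_def fa_zero_def)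

lemma jac_eq_via: "c \<in> jac_ideal m \<Longrightarrow> c = fa_sub a b \<Longrightarrow> jac_eq m a b"
  by (simp add: jac_eq_def)

lemma jac_eq_refl: "jac_eq m a a"
  by (rule jac_eq_via[OF jac_ideal.zero]) (simp add: fa_sub_def fa_zero_def)

lemma jac_eq_sym:
  assumes "jac_eq m a b" shows "jac_eq m b a"
proof (rule jac_eq_via)
  show "fa_neg (fa_sub a b) \<in> jac_ideal m"
    using assms unfolding jac_eq_def by (rule jac_ideal_neg)
qed (simp add: fa_neg_def fa_sub_def)

lemma jac_eq_trans:
  assumes "jac_eq m a b" "jac_eq m b c" shows "jac_eq m a c"
proof (rule jac_eq_via)
  show "fa_add (fa_sub a b) (fa_sub b c) \<in> jac_ideal m"
    using assms unfolding jac_eq_def by (rule jac_ideal.add)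
qed (simp add: fa_add_def fa_sub_def)

lemma jac_eq_add:
  assumes "jac_eq m a b" "jac_eq m c d" shows "jac_eq m (fa_add a c) (fa_add b d)"
proof (rule jac_eq_via)
  show "fa_add (fa_sub a b) (fa_sub c d) \<in> jac_ideal m"
    using assms unfolding jac_eq_def by (rule jac_ideal.add)
qed (simp add: fa_add_def fa_sub_def fun_eq_iff)

lemma jac_eq_neg:
  assumes "jac_eq m a b" shows "jac_eq m (fa_neg a) (fa_neg b)"
proof (rule jac_eq_via)
  show "fa_neg (fa_sub a b) \<in> jac_ideal m"
    using assms unfolding jac_eq_def by (rule jac_ideal_neg)
qed (simp add: fa_neg_def fa_sub_def)

lemma jac_eq_sub:
  assumes "jac_eq m a b" "jac_eq m c d" shows "jac_eq m (fa_sub a c) (fa_sub b d)"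
proof (rule jac_eq_via)
  show "fa_add (fa_sub a b) (fa_neg (fa_sub c d)) \<in> jac_ideal m"
    using assms unfolding jac_eq_def by (intro jac_ideal.add jac_ideal_neg)
qed (simp add: fa_add_def fa_sub_def fa_neg_def fun_eq_iff)

lemma jac_eq_mult:
  assumes "jac_eq m a b" "jac_eq m c d" "b \<in> free_alg m" "c \<in> free_alg m"
  shows "jac_eq m (fa_mult a c) (fa_mult b d)"
proof (rule jac_eq_via)
  show "fa_add (fa_mult (fa_sub a b) c) (fa_mult b (fa_sub c d)) \<in> jac_ideal m"
    using assms unfolding jac_eq_def
    by (intro jac_ideal.add jac_ideal_mult_left jac_ideal_mult_right)
qed (simp add: fa_mult_sub_left fa_mult_sub_right, simp add: fa_add_def fa_sub_def)


section \<open>The product ring \<open>\<Prod>\<^sub>m S_m\<close>\<close>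

text \<open>A type cannot depend on the number \<open>m\<close>, so instead of \<open>S_m\<close> we build the product of all
  the \<open>S_m\<close> as a quotient type.  A tower is a family of representatives \<open>f m \<in> F_m\<close>; two towers
  are identified when they agree in every \<open>S_m\<close>.  Identities proved in this ring then hold
  in each \<open>S_m\<close> separately.\<close>

definition admissible :: "(nat \<Rightarrow> 'k::field fa) \<Rightarrow> bool" where
  "admissible f \<longleftrightarrow> (\<forall>m. f m \<in> free_alg m)"

definition tower_eq :: "(nat \<Rightarrow> 'k::field fa) \<Rightarrow> (nat \<Rightarrow> 'k fa) \<Rightarrow> bool" where
  "tower_eq f g \<longleftrightarrow> admissible f \<and> admissible g \<and> (\<forall>m. jac_eq m (f m) (g m))"

lemma tower_eq_part_equivp: "part_equivp (tower_eq :: (nat \<Rightarrow> 'k::field fa) \<Rightarrow> _)"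
proof (rule part_equivpI)
  show "\<exists>f::nat \<Rightarrow> 'k fa. tower_eq f f"
    by (rule exI[of _ "\<lambda>m. fa_zero"]) (simp add: tower_eq_def admissible_def free_alg_zero jac_eq_refl)
  show "symp (tower_eq :: (nat \<Rightarrow> 'k::field fa) \<Rightarrow> _)"
    by (auto simp: symp_def tower_eq_def intro: jac_eq_sym)
  show "transp (tower_eq :: (nat \<Rightarrow> 'k::field fa) \<Rightarrow> _)"
    by (auto simp: transp_def tower_eq_def intro: jac_eq_trans)
qed

quotient_type (overloaded) 'k jac_prod = "nat \<Rightarrow> ('k::field) fa" / partial: tower_eq
  by (rule tower_eq_part_equivp)

lemma tower_eq_self: "tower_eq f f \<longleftrightarrow> admissible f"
  by (simp add: tower_eq_def jac_eq_refl)

definition tw_add :: "(nat \<Rightarrow> 'k::field fa) \<Rightarrow> (nat \<Rightarrow> 'k fa) \<Rightarrow> nat \<Rightarrow> 'k fa" where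
  "tw_add f g = (\<lambda>m. fa_add (f m) (g m))"
definition tw_sub :: "(nat \<Rightarrow> 'k::field fa) \<Rightarrow> (nat \<Rightarrow> 'k fa) \<Rightarrow> nat \<Rightarrow> 'k fa" where
  "tw_sub f g = (\<lambda>m. fa_sub (f m) (g m))"
definition tw_mult :: "(nat \<Rightarrow> 'k::field fa) \<Rightarrow> (nat \<Rightarrow> 'k fa) \<Rightarrow> nat \<Rightarrow> 'k fa" where
  "tw_mult f g = (\<lambda>m. fa_mult (f m) (g m))"
definition tw_neg :: "(nat \<Rightarrow> 'k::field fa) \<Rightarrow> nat \<Rightarrow> 'k fa" where
  "tw_neg f = (\<lambda>m. fa_neg (f m))"
definition tw_one :: "nat \<Rightarrow> 'k::field fa" where
  "tw_one = (\<lambda>m. fa_one)"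
definition tw_zero :: "nat \<Rightarrow> 'k::field fa" where
  "tw_zero = (\<lambda>m. fa_zero)"

lemma admissible_ops:
  "admissible f \<Longrightarrow> admissible g \<Longrightarrow> admissible (tw_add f g)"
  "admissible f \<Longrightarrow> admissible g \<Longrightarrow> admissible (tw_sub f g)"
  "admissible f \<Longrightarrow> admissible g \<Longrightarrow> admissible (tw_mult f g)"
  "admissible f \<Longrightarrow> admissible (tw_neg f)"
  "admissible tw_one" "admissible tw_zero"
  by (simp_all add: admissible_def tw_add_def tw_sub_def tw_mult_def tw_neg_def tw_one_def
      tw_zero_def free_alg_add free_alg_sub free_alg_mult free_alg_neg free_alg_one free_alg_zero)

text \<open>The ring axioms hold for the representatives literally, not just up to the relations.\<close>

lemma tower_eq_if_equal: "g = f \<Longrightarrow> admissible f \<Longrightarrow> tower_eq g f"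
  by (simp add: tower_eq_self)

instantiation jac_prod :: (field) ring_1
begin

lift_definition zero_jac_prod :: "'a jac_prod" is tw_zero
  by (simp add: tower_eq_self admissible_ops)
lift_definition one_jac_prod :: "'a jac_prod" is tw_one
  by (simp add: tower_eq_self admissible_ops)
lift_definition plus_jac_prod :: "'a jac_prod \<Rightarrow> 'a jac_prod \<Rightarrow> 'a jac_prod" is tw_add
  unfolding tower_eq_def admissible_def tw_add_def by (auto intro: jac_eq_add free_alg_add)
lift_definition minus_jac_prod :: "'a jac_prod \<Rightarrow> 'a jac_prod \<Rightarrow> 'a jac_prod" is tw_sub
  unfolding tower_eq_def admissible_def tw_sub_def by (auto intro: jac_eq_sub free_alg_sub)
lift_definition uminus_jac_prod :: "'a jac_prod \<Rightarrow> 'a jac_prod" is tw_neg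
  unfolding tower_eq_def admissible_def tw_neg_def by (auto intro: jac_eq_neg free_alg_neg)
lift_definition times_jac_prod :: "'a jac_prod \<Rightarrow> 'a jac_prod \<Rightarrow> 'a jac_prod" is tw_mult
  unfolding tower_eq_def admissible_def tw_mult_def by (auto intro: jac_eq_mult free_alg_mult)

instance
proof
  fix a b c :: "'a jac_prod"
  show "a + b + c = a + (b + c)"
    by transfer (rule tower_eq_if_equal, simp add: tw_add_def fa_add_def add.assoc,
        simp add: tower_eq_self admissible_ops)
  show "a + b = b + a"
    by transfer (rule tower_eq_if_equal, simp add: tw_add_def fa_add_def add.commute,
        simp add: tower_eq_self admissible_ops)
  show "0 + a = a"
    by transfer (rule tower_eq_if_equal, simp add: tw_add_def fa_add_def tw_zero_def fa_zero_def,
        simp add: tower_eq_self)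
  show "- a + a = 0"
    by transfer (rule tower_eq_if_equal, simp add: tw_add_def fa_add_def tw_zero_def fa_zero_def
        tw_neg_def fa_neg_def, simp add: admissible_ops)
  show "a - b = a + - b"
    by transfer (rule tower_eq_if_equal, simp add: tw_add_def fa_add_def tw_sub_def fa_sub_def
        tw_neg_def fa_neg_def, simp add: tower_eq_self admissible_ops)
  show "a * b * c = a * (b * c)"
    by transfer (rule tower_eq_if_equal, simp add: tw_mult_def fa_mult_assoc,
        simp add: tower_eq_self admissible_ops)
  show "1 * a = a"
    by transfer (rule tower_eq_if_equal, simp add: tw_mult_def tw_one_def fa_mult_one_left,
        simp add: tower_eq_self)
  show "a * 1 = a"
    by transfer (rule tower_eq_if_equal, simp add: tw_mult_def tw_one_def fa_mult_one_right,
        simp add: tower_eq_self)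
  show "(a + b) * c = a * c + b * c"
    by transfer (rule tower_eq_if_equal, simp add: tw_mult_def tw_add_def fa_mult_add_left,
        simp add: tower_eq_self admissible_ops)
  show "a * (b + c) = a * b + a * c"
    by transfer (rule tower_eq_if_equal, simp add: tw_mult_def tw_add_def fa_mult_add_right,
        simp add: tower_eq_self admissible_ops)
  show "(0::'a jac_prod) \<noteq> 1"
  proof transfer
    \<comment> \<open>already \<open>S_0 = K\<close> separates \<open>0\<close> from \<open>1\<close>\<close>
    have "\<not> jac_eq 0 (fa_zero::'a fa) fa_one"
    proof
      assume "jac_eq 0 (fa_zero::'a fa) fa_one"
      then have "fa_sub (fa_zero::'a fa) fa_one [] = fa_zero []"
        unfolding jac_eq_def by (metis jac_ideal_0)
      then show False by (simp add: fa_sub_def fa_zero_def fa_one_def)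
    qed
    then show "\<not> tower_eq (tw_zero::nat \<Rightarrow> 'a fa) tw_one"
      by (auto simp: tower_eq_def tw_zero_def tw_one_def)
  qed
qed

end

lemma abs_jac_prod_eq_iff:
  assumes "admissible f" "admissible g"
  shows "abs_jac_prod f = abs_jac_prod g \<longleftrightarrow> (\<forall>m. jac_eq m (f m) (g m))"
  using Quotient_rel[OF Quotient_jac_prod, of f g] assms by (simp add: tower_eq_def jac_eq_refl)

lemma admissible_rep: "admissible (rep_jac_prod q)"
  using Quotient_rep_reflp[OF Quotient_jac_prod, of q] by (simp add: tower_eq_self)

lemma abs_rep: "abs_jac_prod (rep_jac_prod q) = q"
  by (rule Quotient_abs_rep[OF Quotient_jac_prod])

lemma tower_eq_rep_abs: "admissible f \<Longrightarrow> tower_eq (rep_jac_prod (abs_jac_prod f)) f"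
  by (rule Quotient_rep_abs[OF Quotient_jac_prod]) (simp add: tower_eq_self)

lemma abs_tw_ops:
  assumes "admissible f" "admissible g"
  shows "abs_jac_prod (tw_add f g) = abs_jac_prod f + abs_jac_prod g"
    and "abs_jac_prod (tw_sub f g) = abs_jac_prod f - abs_jac_prod g"
    and "abs_jac_prod (tw_mult f g) = abs_jac_prod f * abs_jac_prod g"
    and "abs_jac_prod (tw_neg f) = - abs_jac_prod f"
proof -
  have f: "tower_eq f (rep_jac_prod (abs_jac_prod f))" and g: "tower_eq g (rep_jac_prod (abs_jac_prod g))"
    using tower_eq_rep_abs assms Quotient_symp[OF Quotient_jac_prod] by (metis sympD)+
  show "abs_jac_prod (tw_add f g) = abs_jac_prod f + abs_jac_prod g"
    unfolding plus_jac_prod_def map_fun_def comp_def id_def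
    using f g by (intro Quotient_rel_abs[OF Quotient_jac_prod])
      (auto simp: tower_eq_def admissible_def tw_add_def intro: jac_eq_add free_alg_add)
  show "abs_jac_prod (tw_sub f g) = abs_jac_prod f - abs_jac_prod g"
    unfolding minus_jac_prod_def map_fun_def comp_def id_def
    using f g by (intro Quotient_rel_abs[OF Quotient_jac_prod])
      (auto simp: tower_eq_def admissible_def tw_sub_def intro: jac_eq_sub free_alg_sub)
  show "abs_jac_prod (tw_mult f g) = abs_jac_prod f * abs_jac_prod g"
    unfolding times_jac_prod_def map_fun_def comp_def id_def
    using f g by (intro Quotient_rel_abs[OF Quotient_jac_prod])
      (auto simp: tower_eq_def admissible_def tw_mult_def intro: jac_eq_mult free_alg_mult)
  show "abs_jac_prod (tw_neg f) = - abs_jac_prod f"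
    unfolding uminus_jac_prod_def map_fun_def comp_def id_def
    using f by (intro Quotient_rel_abs[OF Quotient_jac_prod])
      (auto simp: tower_eq_def admissible_def tw_neg_def intro: jac_eq_neg free_alg_neg)
qed

lemma abs_tw_one: "abs_jac_prod tw_one = 1" and abs_tw_zero: "abs_jac_prod tw_zero = 0"
  by (simp_all add: one_jac_prod_def zero_jac_prod_def)


text \<open>The element \<open>e_I\<close> is an ordered product of commuting idempotents; these general facts
  say that such a product is again idempotent, commutes with whatever commutes with its factors,
  and does not depend on where a new factor is inserted.\<close>

lemma prod_list_commute:
  fixes z :: "'a::monoid_mult"
  assumes "\<And>x. x \<in> set xs \<Longrightarrow> z * x = x * z"
  shows "z * prod_list xs = prod_list xs * z"
  using assms
proof (induction xs)
  case (Cons x xs)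
  have "z * (x * prod_list xs) = x * (z * prod_list xs)"
    using Cons.prems[of x] by (simp add: mult.assoc[symmetric])
  also have "\<dots> = x * prod_list xs * z"
    using Cons by (simp add: mult.assoc)
  finally show ?case by simp
qed simp

lemma prod_list_idem:
  fixes xs :: "'a::monoid_mult list"
  assumes "\<And>x. x \<in> set xs \<Longrightarrow> x * x = x"
    and "\<And>x y. x \<in> set xs \<Longrightarrow> y \<in> set xs \<Longrightarrow> x * y = y * x"
  shows "prod_list xs * prod_list xs = prod_list xs"
  using assms
proof (induction xs)
  case (Cons x xs)
  have comm: "x * prod_list xs = prod_list xs * x"
    by (rule prod_list_commute) (use Cons.prems(2) in auto)
  have "x * prod_list xs * (x * prod_list xs) = x * ((prod_list xs * x) * prod_list xs)"
    by (simp add: mult.assoc)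
  also have "\<dots> = x * ((x * prod_list xs) * prod_list xs)"
    by (simp only: comm)
  also have "\<dots> = (x * x) * (prod_list xs * prod_list xs)"
    by (simp add: mult.assoc)
  also have "\<dots> = x * prod_list xs"
    using Cons by simp
  finally show ?case by simp
qed simp

lemma prod_list_insort:
  fixes e :: "nat \<Rightarrow> 'a::monoid_mult"
  assumes "\<And>l. l \<in> set ks \<Longrightarrow> e k * e l = e l * e k"
  shows "prod_list (map e (insort k ks)) = e k * prod_list (map e ks)"
  using assms
proof (induction ks)
  case (Cons l ks)
  show ?case
  proof (cases "k \<le> l")
    case False
    then have "prod_list (map e (insort k (l # ks))) = e l * (e k * prod_list (map e ks))"
      using Cons by simp
    also have "\<dots> = e k * (e l * prod_list (map e ks))"
      using Cons.prems[of l] by (simp add: mult.assoc[symmetric])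
    finally show ?thesis by simp
  qed simp
qed simp


text \<open>A letter is sent to itself in every \<open>S_m\<close> containing it and to \<open>1\<close> in the others; in the
  latter the defining relations hold trivially, so they hold in the product ring.\<close>

definition tw_gen :: "letter \<Rightarrow> nat \<Rightarrow> 'k::field fa" where
  "tw_gen c = (\<lambda>m. if c \<in> letters m then fa_gen c else fa_one)"

definition jgen :: "letter \<Rightarrow> 'k::field jac_prod" where
  "jgen c = abs_jac_prod (tw_gen c)"

abbreviation jx :: "nat \<Rightarrow> 'k::field jac_prod" where "jx i \<equiv> jgen (X i)"
abbreviation jy :: "nat \<Rightarrow> 'k::field jac_prod" where "jy i \<equiv> jgen (Y i)"

lemma letters_iff: "X i \<in> letters m \<longleftrightarrow> i \<in> {1..m}" "Y i \<in> letters m \<longleftrightarrow> i \<in> {1..m}"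
  by (auto simp: letters_def)

lemma admissible_tw_gen: "admissible (tw_gen c)"
  by (simp add: admissible_def tw_gen_def free_alg_gen free_alg_one)

lemma jy_mult_jx:
  assumes "1 \<le> i"
  shows "jy i * jx i = (1 :: 'k::field jac_prod)"
proof -
  have "abs_jac_prod (tw_mult (tw_gen (Y i)) (tw_gen (X i))) = (abs_jac_prod tw_one :: 'k jac_prod)"
    unfolding abs_jac_prod_eq_iff[OF admissible_ops(3)[OF admissible_tw_gen admissible_tw_gen]
        admissible_ops(5)]
  proof
    fix m
    show "jac_eq m (tw_mult (tw_gen (Y i)) (tw_gen (X i)) m) (tw_one m :: 'k fa)"
    proof (cases "i \<le> m")
      case True
      then have "fa_sub (fa_mult (fa_gen (Y i)) (fa_gen (X i))) fa_one \<in> (jac_rels m :: 'k fa set)"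
        using assms unfolding jac_rels_def by auto
      then show ?thesis
        using True assms by (simp add: tw_mult_def tw_one_def tw_gen_def letters_iff jac_eq_def jac_ideal_rel)
    qed (simp add: tw_mult_def tw_one_def tw_gen_def letters_iff fa_mult_one_left jac_eq_refl)
  qed
  then show ?thesis
    by (simp add: jgen_def abs_tw_ops admissible_tw_gen abs_tw_one)
qed

lemma jgen_commute:
  assumes rel: "\<And>m. c \<in> letters m \<Longrightarrow> d \<in> letters m
                 \<Longrightarrow> fa_comm (fa_gen c) (fa_gen d) \<in> (jac_rels m :: 'k::field fa set)"
  shows "jgen c * jgen d = (jgen d * jgen c :: 'k jac_prod)"
proof -
  have "abs_jac_prod (tw_mult (tw_gen c) (tw_gen d)) = (abs_jac_prod (tw_mult (tw_gen d) (tw_gen c)) :: 'k jac_prod)"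
    unfolding abs_jac_prod_eq_iff[OF admissible_ops(3)[OF admissible_tw_gen admissible_tw_gen]
        admissible_ops(3)[OF admissible_tw_gen admissible_tw_gen]]
  proof
    fix m
    show "jac_eq m (tw_mult (tw_gen c) (tw_gen d) m) (tw_mult (tw_gen d) (tw_gen c) m :: 'k fa)"
    proof (cases "c \<in> letters m \<and> d \<in> letters m")
      case True
      then show ?thesis
        using jac_ideal_rel[OF rel[of m]] by (simp add: tw_mult_def tw_gen_def jac_eq_def fa_comm_def)
    qed (auto simp: tw_mult_def tw_gen_def fa_mult_one_left fa_mult_one_right jac_eq_refl)
  qed
  then show ?thesis
    by (simp add: jgen_def abs_tw_ops admissible_tw_gen)
qed

lemma generators_commute:
  assumes "i \<noteq> j"
  shows "jx i * jy j = (jy j * jx i :: 'k::field jac_prod)"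
    and "jx i * jx j = (jx j * jx i :: 'k::field jac_prod)"
    and "jy i * jy j = (jy j * jy i :: 'k::field jac_prod)"
proof -
  have rel: "fa_comm (fa_gen c) (fa_gen d) \<in> (jac_rels m :: 'k fa set)"
    if "c \<in> letters m" "d \<in> letters m" "(c, d) \<in> {(X i, Y j), (X i, X j), (Y i, Y j)}" for c d m
    using that assms unfolding letters_def jac_rels_def by blast
  show "jx i * jy j = (jy j * jx i :: 'k jac_prod)"
    by (rule jgen_commute) (simp add: rel)
  show "jx i * jx j = (jx j * jx i :: 'k jac_prod)"
    by (rule jgen_commute) (simp add: rel)
  show "jy i * jy j = (jy j * jy i :: 'k jac_prod)"
    by (rule jgen_commute) (simp add: rel)
qed


definition je :: "nat \<Rightarrow> 'k::field jac_prod" where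
  "je k = 1 - jx k * jy k"

definition jeI :: "nat set \<Rightarrow> 'k::field jac_prod" where
  "jeI S = prod_list (map je (sorted_list_of_set S))"

lemma je_idem: "1 \<le> k \<Longrightarrow> je k * je k = (je k :: 'k::field jac_prod)"
proof -
  assume "1 \<le> k"
  then have "jx k * jy k * (jx k * jy k) = (jx k * jy k :: 'k jac_prod)"
    by (metis mult.assoc mult_1 jy_mult_jx)
  then show ?thesis by (simp add: je_def algebra_simps)
qed

lemma commute_je:
  fixes z :: "'k::field jac_prod"
  shows "z * jx k = jx k * z \<Longrightarrow> z * jy k = jy k * z \<Longrightarrow> z * je k = je k * z"
  unfolding je_def by (simp add: algebra_simps) (metis mult.assoc)

lemma je_commute:
  assumes "k \<noteq> l"
  shows "jx l * je k = je k * (jx l :: 'k::field jac_prod)"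
    and "jy l * je k = je k * (jy l :: 'k::field jac_prod)"
    and "je l * je k = je k * (je l :: 'k::field jac_prod)"
proof -
  have "jx l * jx k = (jx k * jx l :: 'k jac_prod)" "jy l * jy k = (jy k * jy l :: 'k jac_prod)"
    "jx l * jy k = (jy k * jx l :: 'k jac_prod)" "jy l * jx k = (jx k * jy l :: 'k jac_prod)"
    using generators_commute[OF assms] generators_commute[OF not_sym[OF assms]] by metis+
  then show x: "jx l * je k = je k * (jx l :: 'k jac_prod)"
    and y: "jy l * je k = je k * (jy l :: 'k jac_prod)"
    by (simp_all add: commute_je)
  show "je l * je k = je k * (je l :: 'k jac_prod)"
    using commute_je[of "je k" l, OF x[symmetric] y[symmetric]] by simp
qed

lemma jeI_idem:
  "finite S \<Longrightarrow> (\<And>k. k \<in> S \<Longrightarrow> 1 \<le> k) \<Longrightarrow> jeI S * jeI S = (jeI S :: 'k::field jac_prod)"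
  unfolding jeI_def
  by (rule prod_list_idem) (auto intro: je_idem je_commute(3))

lemma jeI_commute:
  "finite S \<Longrightarrow> (\<And>k. k \<in> S \<Longrightarrow> z * je k = je k * z) \<Longrightarrow> z * jeI S = jeI S * (z :: 'k::field jac_prod)"
  unfolding jeI_def by (rule prod_list_commute) auto

lemma jeI_insert:
  "finite S \<Longrightarrow> k \<notin> S \<Longrightarrow> jeI (insert k S) = je k * (jeI S :: 'k::field jac_prod)"
  unfolding jeI_def
  by (simp add: sorted_list_of_set_insert_remove, rule prod_list_insort)
     (metis je_commute(3) set_sorted_list_of_set)


text \<open>Matrices are functions of two indices; only the block of indices below \<open>3\<close> matters,
  and \<open>agree3\<close> compares two matrices on that block.\<close>

type_synonym 'r mat3 = "nat \<Rightarrow> nat \<Rightarrow> 'r"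

definition mat3_mult :: "'r::ring_1 mat3 \<Rightarrow> 'r mat3 \<Rightarrow> 'r mat3" where
  "mat3_mult A B = (\<lambda>i j. \<Sum>k<3. A i k * B k j)"

definition mat3_one :: "'r::ring_1 mat3" where
  "mat3_one = (\<lambda>i j. if i = j then 1 else 0)"

definition elem3 :: "nat \<Rightarrow> nat \<Rightarrow> 'r::ring_1 \<Rightarrow> 'r mat3" where
  "elem3 k l a = (\<lambda>i j. if i = j then 1 else if i = k \<and> j = l then a else 0)"

definition diag3 :: "'r::ring_1 \<Rightarrow> 'r mat3" where
  "diag3 u = (\<lambda>i j. if i = j then (if i = 0 then u else 1) else 0)"

definition word3 :: "(nat \<times> nat \<times> 'r::ring_1) list \<Rightarrow> 'r mat3" where
  "word3 L = foldr (\<lambda>(k, l, a) P. mat3_mult (elem3 k l a) P) L mat3_one"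

definition agree3 :: "'r mat3 \<Rightarrow> 'r mat3 \<Rightarrow> bool" where
  "agree3 A B \<longleftrightarrow> (\<forall>i<3. \<forall>j<3. A i j = B i j)"

lemma sum_less_3: "(\<Sum>k<3::nat. f k) = f 0 + f 1 + f 2"
  by (simp add: eval_nat_numeral)

lemma less_3_iff: "(i::nat) < 3 \<longleftrightarrow> i = 0 \<or> i = 1 \<or> i = 2"
  by auto

lemma agree3_trans: "agree3 A B \<Longrightarrow> agree3 B C \<Longrightarrow> agree3 A C"
  by (simp add: agree3_def)

lemma mat3_mult_assoc: "mat3_mult (mat3_mult A B) C = mat3_mult A (mat3_mult B C)"
  unfolding mat3_mult_def
  by (simp add: fun_eq_iff sum_less_3 algebra_simps)

lemma agree3_mult: "agree3 A A' \<Longrightarrow> agree3 B B' \<Longrightarrow> agree3 (mat3_mult A B) (mat3_mult A' B')"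
  by (simp add: agree3_def mat3_mult_def)

lemma foldr_word3:
  "agree3 (foldr (\<lambda>(k, l, a) P. mat3_mult (elem3 k l a) P) L P) (mat3_mult (word3 L) P)"
proof (induction L)
  case Nil
  show ?case by (simp add: agree3_def word3_def mat3_mult_def mat3_one_def less_3_iff sum_less_3)
next
  case (Cons x L)
  obtain k l a where x: "x = (k, l, a)" by (cases x)
  have "agree3 (mat3_mult (elem3 k l a) (foldr (\<lambda>(k, l, a) P. mat3_mult (elem3 k l a) P) L P))
                (mat3_mult (elem3 k l a) (mat3_mult (word3 L) P))"
    using Cons.IH by (intro agree3_mult) (simp_all add: agree3_def)
  then show ?case by (simp add: x word3_def mat3_mult_assoc)
qed

lemma word3_append: "agree3 (word3 (L @ L')) (mat3_mult (word3 L) (word3 L'))"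
  using foldr_word3[of L "word3 L'"] by (simp add: word3_def)


section \<open>Two Whitehead-type words\<close>

text \<open>Let \<open>a b = 1\<close> and let \<open>p\<close> be an idempotent commuting with \<open>a\<close> and \<open>b\<close>.  Two products of six
  elementary matrices in rows and columns \<open>0\<close> and \<open>t\<close> are the triangular matrices
  with diagonal \<open>(1 + p(a - 1), 1 + p(b - 1))\<close>, resp. its reverse, and off-diagonal entry
  \<open>p(1 - b a)\<close>.  When also \<open>b a = 1\<close> this is Whitehead's lemma \<open>diag(u, u\<inverse>) \<in> E\<close>.\<close>

definition lower_word :: "'r::ring_1 \<Rightarrow> 'r \<Rightarrow> 'r \<Rightarrow> nat \<Rightarrow> (nat \<times> nat \<times> 'r) list" where
  "lower_word p a b t = [(0, t, p * a), (t, 0, - (p * b)), (0, t, p * a), (0, t, - p), (t, 0, p), (0, t, - p)]"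

definition upper_word :: "'r::ring_1 \<Rightarrow> 'r \<Rightarrow> 'r \<Rightarrow> nat \<Rightarrow> (nat \<times> nat \<times> 'r) list" where
  "upper_word p a b t = [(0, t, p), (t, 0, - p), (0, t, p), (0, t, - (p * a)), (t, 0, p * b), (0, t, - (p * a))]"

definition lower_mat :: "'r::ring_1 \<Rightarrow> 'r \<Rightarrow> 'r \<Rightarrow> nat \<Rightarrow> 'r mat3" where
  "lower_mat p a b t = (\<lambda>i j.
     if i = 0 \<and> j = 0 then 1 + p * (a - 1) else if i = t \<and> j = 0 then p * (1 - b * a)
     else if i = t \<and> j = t then 1 + p * (b - 1) else if i = j then 1 else 0)"

definition upper_mat :: "'r::ring_1 \<Rightarrow> 'r \<Rightarrow> 'r \<Rightarrow> nat \<Rightarrow> 'r mat3" where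
  "upper_mat p a b t = (\<lambda>i j.
     if i = 0 \<and> j = 0 then 1 + p * (b - 1) else if i = 0 \<and> j = t then p * (1 - b * a)
     else if i = t \<and> j = t then 1 + p * (a - 1) else if i = j then 1 else 0)"

lemma whitehead_words:
  fixes p a b :: "'r::ring_1"
  assumes ab: "a * b = 1" and pp: "p * p = p" and pa: "p * a = a * p" and pb: "p * b = b * p"
    and t: "t = 1 \<or> t = 2"
  shows "agree3 (word3 (lower_word p a b t)) (lower_mat p a b t)"
    and "agree3 (word3 (upper_word p a b t)) (upper_mat p a b t)"
proof -
  have r1: "a * (b * z) = z" for z by (metis ab mult.assoc mult_1)
  have r2: "p * (p * z) = p * z" for z by (metis pp mult.assoc)
  have r3: "a * (p * z) = p * (a * z)" for z by (metis pa mult.assoc)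
  have r4: "b * (p * z) = p * (b * z)" for z by (metis pb mult.assoc)
  note rules = ab pp r1 r2 r3 r4 pa[symmetric] pb[symmetric]
  show "agree3 (word3 (lower_word p a b t)) (lower_mat p a b t)"
    using t unfolding agree3_def less_3_iff
    by (auto simp: word3_def lower_word_def lower_mat_def mat3_mult_def elem3_def mat3_one_def
        sum_less_3 algebra_simps rules)
  show "agree3 (word3 (upper_word p a b t)) (upper_mat p a b t)"
    using t unfolding agree3_def less_3_iff
    by (auto simp: word3_def upper_word_def upper_mat_def mat3_mult_def elem3_def mat3_one_def
        sum_less_3 algebra_simps rules)
qed

lemma triangular_product_diag:
  fixes p x1 y1 x2 y2 :: "'r::ring_1"
  assumes a1: "y1 * x1 = 1" and a2: "y2 * x2 = 1" and pp: "p * p = p"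
    and c1: "x1 * p = p * x1" "y1 * p = p * y1" "x2 * p = p * x2" "y2 * p = p * y2"
    and c2: "x2 * x1 = x1 * x2" "x2 * y1 = y1 * x2" "y2 * x1 = x1 * y2" "y2 * y1 = y1 * y2"
  shows "agree3 (mat3_mult (upper_mat p y2 x2 1) (mat3_mult (upper_mat p y1 x1 2)
                   (mat3_mult (lower_mat p y2 x2 1) (lower_mat p y1 x1 2))))
                (diag3 ((1 + (y1 - 1) * ((1 - x2 * y2) * p)) * (1 + (x2 - 1) * ((1 - x1 * y1) * p))))"
proof -
  have r1: "y1 * (x1 * z) = z" "y2 * (x2 * z) = z" for z by (metis a1 a2 mult.assoc mult_1)+
  have r2: "p * (p * z) = p * z" for z by (metis pp mult.assoc)
  have r3: "x1 * (p * z) = p * (x1 * z)" "y1 * (p * z) = p * (y1 * z)"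
           "x2 * (p * z) = p * (x2 * z)" "y2 * (p * z) = p * (y2 * z)" for z
    by (metis c1 mult.assoc)+
  have r4: "x2 * (x1 * z) = x1 * (x2 * z)" "x2 * (y1 * z) = y1 * (x2 * z)"
           "y2 * (x1 * z) = x1 * (y2 * z)" "y2 * (y1 * z) = y1 * (y2 * z)" for z
    by (metis c2 mult.assoc)+
  show ?thesis
    unfolding agree3_def less_3_iff
    by (auto simp: upper_mat_def lower_mat_def diag3_def mat3_mult_def sum_less_3 algebra_simps
        a1 a2 pp c1 c2 r1 r2 r3 r4)
qed

lemma theta_word:
  fixes p x1 y1 x2 y2 :: "'r::ring_1"
  assumes "y1 * x1 = 1" "y2 * x2 = 1" "p * p = p"
    and "x1 * p = p * x1" "y1 * p = p * y1" "x2 * p = p * x2" "y2 * p = p * y2"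
    and "x2 * x1 = x1 * x2" "x2 * y1 = y1 * x2" "y2 * x1 = x1 * y2" "y2 * y1 = y1 * y2"
  shows "agree3 (word3 (upper_word p y2 x2 1 @ upper_word p y1 x1 2 @ lower_word p y2 x2 1 @ lower_word p y1 x1 2))
                (diag3 ((1 + (y1 - 1) * ((1 - x2 * y2) * p)) * (1 + (x2 - 1) * ((1 - x1 * y1) * p))))"
proof -
  have "agree3 (word3 (upper_word p y2 x2 1 @ upper_word p y1 x1 2 @ lower_word p y2 x2 1 @ lower_word p y1 x1 2))
         (mat3_mult (upper_mat p y2 x2 1) (mat3_mult (upper_mat p y1 x1 2)
                   (mat3_mult (lower_mat p y2 x2 1) (lower_mat p y1 x1 2))))"
    using assms
    by (intro agree3_trans[OF word3_append] agree3_mult whitehead_words) (simp_all add: agree3_def)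
  then show ?thesis
    using triangular_product_diag[OF assms] agree3_trans by blast
qed


section \<open>From words over the product ring to elementary matrices over \<open>S_m\<close>\<close>

text \<open>A word over \<open>\<Prod>\<^sub>m S_m\<close> is evaluated at level \<open>m\<close> by choosing representatives; the
  resulting products of concrete elementary matrices form, entrywise, towers whose classes
  are the entries of the abstract product.\<close>

definition level_word :: "nat \<Rightarrow> (nat \<times> nat \<times> 'k::field jac_prod) list \<Rightarrow> (nat \<times> nat \<times> 'k fa) list" where
  "level_word m L = map (\<lambda>(k, l, q). (k, l, rep_jac_prod q m)) L"

definition level_prod :: "nat \<Rightarrow> (nat \<times> nat \<times> 'k::field jac_prod) list \<Rightarrow> 'k fmat" where
  "level_prod m L = foldr (\<lambda>(k, l, a) P. mat_mult 3 (elem_mat k l a) P) (level_word m L) mat_one"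

lemma level_prod_tower:
  "admissible (\<lambda>m. level_prod m L i j) \<and> abs_jac_prod (\<lambda>m. level_prod m L i j) = word3 L i j"
proof (induction L arbitrary: i j)
  case Nil
  have "(\<lambda>m. level_prod m [] i j) = (if i = j then tw_one else (tw_zero :: nat \<Rightarrow> 'a fa))"
    by (simp add: level_prod_def level_word_def mat_one_def tw_one_def tw_zero_def)
  then show ?case
    by (simp add: admissible_ops abs_tw_one abs_tw_zero word3_def mat3_one_def)
next
  case (Cons x L)
  obtain k l q where x: "x = (k, l, q)" by (cases x)
  define E where "E c = (if i = c then tw_one else if i = k \<and> c = l then rep_jac_prod q else tw_zero)" for c
  define C where "C c = (\<lambda>m. level_prod m L c j)" for c
  have E: "admissible (E c) \<and> abs_jac_prod (E c) = elem3 k l q i c" for c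
    by (simp add: E_def admissible_ops admissible_rep abs_tw_one abs_tw_zero abs_rep elem3_def)
  have C: "admissible (C c) \<and> abs_jac_prod (C c) = word3 L c j" for c
    using Cons.IH by (simp add: C_def)
  have tower: "(\<lambda>m. level_prod m (x # L) i j)
      = tw_add (tw_add (tw_mult (E 0) (C 0)) (tw_mult (E 1) (C 1))) (tw_mult (E 2) (C 2))"
    by (simp add: x fun_eq_iff level_prod_def level_word_def mat_mult_def sum_less_3 elem_mat_def
        E_def C_def tw_add_def tw_mult_def tw_one_def tw_zero_def fa_add_def)
  show ?case
    unfolding tower using E C
    by (simp add: admissible_ops abs_tw_ops x word3_def mat3_mult_def sum_less_3)
qed

lemma in_E_N_of_word:
  fixes L :: "(nat \<times> nat \<times> 'k::field jac_prod) list" and T :: "nat \<Rightarrow> nat \<Rightarrow> nat \<Rightarrow> 'k fa"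
  assumes indices: "\<forall>(k, l, q) \<in> set L. k < 3 \<and> l < 3 \<and> k \<noteq> l"
    and T: "\<And>a b. admissible (T a b)"
    and agree: "agree3 (word3 L) (\<lambda>a b. abs_jac_prod (T a b))"
  shows "in_E_N m 3 (\<lambda>a b. T a b m)"
  unfolding in_E_N_def
proof (intro exI[of _ "level_word m L"] conjI allI impI)
  show "\<forall>(k, l, a) \<in> set (level_word m L). k < 3 \<and> l < 3 \<and> k \<noteq> l \<and> a \<in> free_alg m"
    using indices admissible_rep by (fastforce simp: level_word_def admissible_def)
  fix a b :: nat assume "a < 3" "b < 3"
  then have "abs_jac_prod (\<lambda>m. level_prod m L a b) = abs_jac_prod (T a b)"
    using level_prod_tower[of L a b] agree by (simp add: agree3_def)
  then show "jac_eq m (foldr (\<lambda>(k, l, a) P. mat_mult 3 (elem_mat k l a) P) (level_word m L) mat_one a b) (T a b m)"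
    using abs_jac_prod_eq_iff[OF conjunct1[OF level_prod_tower] T] by (simp add: level_prod_def)
qed


text \<open>The elements \<open>e_I\<close> and \<open>\<theta>_ij(J)\<close> of the product ring, and towers representing them whose
  \<open>m\<close>-th level is literally the representative used in the statement.\<close>

definition jtheta :: "nat \<Rightarrow> nat \<Rightarrow> nat set \<Rightarrow> 'k::field jac_prod" where
  "jtheta i j J = (1 + (jy i - 1) * jeI (J - {i})) * (1 + (jx j - 1) * jeI (J - {j}))"

definition tw_e :: "nat \<Rightarrow> nat \<Rightarrow> 'k::field fa" where
  "tw_e k = tw_sub tw_one (tw_mult (tw_gen (X k)) (tw_gen (Y k)))"

definition tw_eI :: "nat set \<Rightarrow> nat \<Rightarrow> 'k::field fa" where
  "tw_eI S = foldr (\<lambda>k acc. tw_mult (tw_e k) acc) (sorted_list_of_set S) tw_one"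

definition tw_theta :: "nat \<Rightarrow> nat \<Rightarrow> nat set \<Rightarrow> nat \<Rightarrow> 'k::field fa" where
  "tw_theta i j J =
     tw_mult (tw_add tw_one (tw_mult (tw_sub (tw_gen (Y i)) tw_one) (tw_eI (J - {i}))))
             (tw_add tw_one (tw_mult (tw_sub (tw_gen (X j)) tw_one) (tw_eI (J - {j}))))"

lemma admissible_tw_e: "admissible (tw_e k)"
  by (simp add: tw_e_def admissible_ops admissible_tw_gen)

lemma abs_tw_e: "abs_jac_prod (tw_e k) = je k"
  by (simp add: tw_e_def je_def jgen_def admissible_ops admissible_tw_gen abs_tw_ops abs_tw_one)

lemma admissible_tw_eI: "admissible (tw_eI S :: nat \<Rightarrow> 'k::field fa)"
  and abs_tw_eI: "abs_jac_prod (tw_eI S) = (jeI S :: 'k jac_prod)"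
proof -
  have "admissible (foldr (\<lambda>k acc. tw_mult (tw_e k) acc) ks (tw_one :: nat \<Rightarrow> 'k fa))
      \<and> abs_jac_prod (foldr (\<lambda>k acc. tw_mult (tw_e k) acc) ks (tw_one :: nat \<Rightarrow> 'k fa))
          = prod_list (map je ks)" for ks
    by (induction ks) (auto simp: admissible_ops abs_tw_one admissible_tw_e abs_tw_ops abs_tw_e)
  then show "admissible (tw_eI S :: nat \<Rightarrow> 'k fa)" "abs_jac_prod (tw_eI S) = (jeI S :: 'k jac_prod)"
    by (simp_all add: tw_eI_def jeI_def)
qed

lemma admissible_tw_theta: "admissible (tw_theta i j J)"
  by (simp add: tw_theta_def admissible_ops admissible_tw_gen admissible_tw_eI)

lemma abs_tw_theta: "abs_jac_prod (tw_theta i j J) = jtheta i j J"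
  by (simp add: tw_theta_def jtheta_def jgen_def admissible_ops admissible_tw_gen admissible_tw_eI
      abs_tw_ops abs_tw_one abs_tw_eI)

lemma tw_theta_at:
  assumes "J \<subseteq> {1..m}" "i \<in> J" "j \<in> J"
  shows "tw_theta i j J m = jac_theta i j J"
proof -
  have eI: "tw_eI S m = jac_eI S" if "S \<subseteq> {1..m}" for S :: "nat set"
  proof -
    have "set ks \<subseteq> {1..m} \<Longrightarrow> foldr (\<lambda>k acc. tw_mult (tw_e k) acc) ks tw_one m
        = foldr (\<lambda>i acc. fa_mult (jac_e i) acc) ks fa_one" for ks
      by (induction ks) (auto simp: tw_one_def tw_mult_def tw_e_def tw_sub_def tw_gen_def letters_iff jac_e_def jac_x_def jac_y_def)
    moreover have "set (sorted_list_of_set S) \<subseteq> {1..m}"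
      using that finite_subset[OF that] by simp
    ultimately show ?thesis by (simp add: tw_eI_def jac_eI_def)
  qed
  show ?thesis
    using assms
    by (simp add: tw_theta_def jac_theta_def tw_mult_def tw_add_def tw_sub_def tw_one_def tw_gen_def
        letters_iff jac_x_def jac_y_def eI subset_iff)
qed

text \<open>The main computation, in the product ring: with \<open>p = e_{J - {i,j}}\<close> we have
  \<open>e_{J - {i}} = e_j p\<close> and \<open>e_{J - {j}} = e_i p\<close>, and \<open>p\<close> is an idempotent commuting with
  \<open>x_i, y_i, x_j, y_j\<close>; so \<open>diag(\<theta>, 1, 1)\<close> is the product of the four Whitehead-type words.\<close>

lemma theta_elementary:
  assumes "finite J" "\<And>k. k \<in> J \<Longrightarrow> 1 \<le> k" "i \<in> J" "j \<in> J" "i \<noteq> j"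
  shows "\<exists>L. (\<forall>(k, l, q) \<in> set L. k < 3 \<and> l < 3 \<and> k \<noteq> l)
           \<and> agree3 (word3 L) (diag3 (jtheta i j J :: 'k::field jac_prod))"
proof -
  define S where "S = J - {i, j}"
  define p :: "'k jac_prod" where "p = jeI S"
  have S: "finite S" "\<And>k. k \<in> S \<Longrightarrow> 1 \<le> k" "i \<notin> S" "j \<notin> S"
    using assms by (auto simp: S_def)
  have "J - {i} = insert j S" "J - {j} = insert i S"
    using assms(3-5) by (auto simp: S_def)
  then have eI_i: "jeI (J - {i}) = je j * p" and eI_j: "jeI (J - {j}) = je i * p"
    using jeI_insert[OF S(1,4)] jeI_insert[OF S(1,3)] by (simp_all add: p_def)
  have p_idem: "p * p = p"
    unfolding p_def by (rule jeI_idem[OF S(1,2)])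
  have p_comm: "z * p = p * z" if "z \<in> {jx i, jy i, jx j, jy j}" for z
    unfolding p_def
  proof (rule jeI_commute[OF S(1)])
    fix k assume "k \<in> S"
    then have "k \<noteq> i" "k \<noteq> j" by (auto simp: S_def)
    then show "z * je k = je k * z" using that je_commute by blast
  qed
  have gens: "jx j * jx i = jx i * (jx j :: 'k jac_prod)" "jx j * jy i = jy i * (jx j :: 'k jac_prod)"
             "jy j * jx i = jx i * (jy j :: 'k jac_prod)" "jy j * jy i = jy i * (jy j :: 'k jac_prod)"
    using generators_commute[OF assms(5)] generators_commute[OF not_sym[OF assms(5)]] by metis+
  let ?L = "upper_word p (jy j) (jx j) 1 @ upper_word p (jy i) (jx i) 2
            @ lower_word p (jy j) (jx j) 1 @ lower_word p (jy i) (jx i) 2"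
  have "agree3 (word3 ?L) (diag3 (jtheta i j J))"
    using theta_word[OF jy_mult_jx jy_mult_jx p_idem p_comm p_comm p_comm p_comm gens] assms(2-4)
    by (simp add: jtheta_def eI_i eI_j je_def)
  moreover have "\<forall>(k, l, q) \<in> set ?L. k < 3 \<and> l < 3 \<and> k \<noteq> l"
    by (auto simp: upper_word_def lower_word_def)
  ultimately show ?thesis by blast
qed


text \<open>Only \<open>J \<subseteq> {1..m}\<close> and
  \<open>i \<noteq> j\<close> in \<open>J\<close> are used; the bounds \<open>m \<ge> 2\<close> and \<open>|J| \<ge> 2\<close> follow from them.\<close>

theorem theorem3p4:
  fixes m i j :: nat and J :: "nat set"
  assumes "m \<ge> 2" and "J \<subseteq> {1..m}" and "card J \<ge> 2"
    and "i \<in> J" and "j \<in> J" and "i \<noteq> j"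
  shows "diag_in_E_inf m (jac_theta i j J :: 'k::field fa)"
proof -
  have "finite J" "\<And>k. k \<in> J \<Longrightarrow> 1 \<le> k"
    using assms(2) by (auto intro: finite_subset)
  then obtain L where indices: "\<forall>(k, l, q) \<in> set L. k < 3 \<and> l < 3 \<and> k \<noteq> l"
    and word: "agree3 (word3 L) (diag3 (jtheta i j J :: 'k jac_prod))"
    using theta_elementary assms(4-6) by blast
  define T :: "nat \<Rightarrow> nat \<Rightarrow> nat \<Rightarrow> 'k fa" where
    "T a b = (if a = b then (if a = 0 then tw_theta i j J else tw_one) else tw_zero)" for a b
  have "in_E_N m 3 (\<lambda>a b. T a b m)"
  proof (rule in_E_N_of_word[OF indices])
    show "admissible (T a b)" for a b
      by (simp add: T_def admissible_tw_theta admissible_ops)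
    show "agree3 (word3 L) (\<lambda>a b. abs_jac_prod (T a b))"
      using word by (simp add: agree3_def diag3_def T_def abs_tw_theta abs_tw_one abs_tw_zero)
  qed
  moreover have "(\<lambda>a b. T a b m) = diag_first (jac_theta i j J)"
    using tw_theta_at[OF assms(2,4,5)]
    by (simp add: fun_eq_iff T_def diag_first_def tw_one_def tw_zero_def)
  ultimately show ?thesis
    unfolding diag_in_E_inf_def by (intro exI[of _ 3]) simp
qed

end
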